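(* Let $A_0,A_1,\ldots,A_n\in M_d(\mathbb C)$ and $X_{\mathrm{free}}=A_0\otimes1+\sum_{i=1}^nA_i\otimes s_i$. For every integer $p\ge2$, \[ \varphi[X_{\mathrm{free}}^p]=\varphi[X_{\mathrm{free}}^{p-1}]\,A_0+\sum_{i=1}^n\sum_{k=0}^{p-2}\varphi[X_{\mathrm{free}}^k]\,A_i\,\varphi[X_{\mathrm{free}}^{p-2-k}]\,A_i . \] Moreover, for every $B\in M_d(\mathbb C)$ and integers $p,q\ge1$, \begin{align*} \varphi[X_{\mathrm{free}}^p(B\otimes1)X_{\mathrm{free}}^q]&=\varphi[X_{\mathrm{free}}^p(B\otimes1)X_{\mathrm{free}}^{q-1}]\,A_0+\sum_{i=1}^n\sum_{k=0}^{p-1}\varphi[X_{\mathrm{free}}^k]\,A_i\,\varphi[X_{\mathrm{free}}^{p-1-k}(B\otimes1)X_{\mathrm{free}}^{q-1}]\,A_i\\ &\quad+\mathbb 1_{\{q\ge2\}}\sum_{i=1}^n\sum_{k=0}^{q-2}\varphi[X_{\mathrm{free}}^p(B\otimes1)X_{\mathrm{free}}^k]\,A_i\,\varphi[X_{\mathrm{free}}^{q-2-k}]\,A_i . \end{align*}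
   Context: $(\mathcal A,\tau)$ is a $C^*$-probability space with faithful tracial state $\tau$ containing freely independent standard semicircular elements $s_1,\ldots,s_n$; $1$ is its unit. $\varphi=\mathrm{Id}\otimes\tau:M_d(\mathbb C)\otimes\mathcal A\to M_d(\mathbb C)$ is the partial trace, i.e. $\varphi[\sum_jM_j\otimes a_j]=\sum_j\tau(a_j)M_j$; $X^0=I\otimes1$. *)

theory Defs
  imports "HOL-Analysis.Analysis" "HOL-Computational_Algebra.Polynomial"
begin

definition cstar_prob_space ::
  "(complex \<Rightarrow> 'a::ring_1 \<Rightarrow> 'a) \<Rightarrow> ('a \<Rightarrow> 'a) \<Rightarrow> ('a \<Rightarrow> real) \<Rightarrow> ('a \<Rightarrow> complex) \<Rightarrow> bool"
where
  "cstar_prob_space sc st nm tau \<longleftrightarrow>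
     \<comment> \<open>complex algebra\<close>
     (\<forall>a. sc 1 a = a) \<and>
     (\<forall>c e a. sc c (sc e a) = sc (c * e) a) \<and>
     (\<forall>c a b. sc c (a + b) = sc c a + sc c b) \<and>
     (\<forall>c e a. sc (c + e) a = sc c a + sc e a) \<and>
     (\<forall>c a b. sc c (a * b) = sc c a * b) \<and>
     (\<forall>c a b. sc c (a * b) = a * sc c b) \<and>
     \<comment> \<open>involution\<close>
     (\<forall>a. st (st a) = a) \<and>
     (\<forall>a b. st (a + b) = st a + st b) \<and>
     (\<forall>a b. st (a * b) = st b * st a) \<and>
     (\<forall>c a. st (sc c a) = sc (cnj c) (st a)) \<and>
     \<comment> \<open>Banach algebra norm with the C*-identity\<close>
     (\<forall>a. 0 \<le> nm a) \<and>
     (\<forall>a. nm a = 0 \<longleftrightarrow> a = 0) \<and>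
     (\<forall>a b. nm (a + b) \<le> nm a + nm b) \<and>
     (\<forall>c a. nm (sc c a) = cmod c * nm a) \<and>
     (\<forall>a b. nm (a * b) \<le> nm a * nm b) \<and>
     (\<forall>a. nm (st a * a) = (nm a)\<^sup>2) \<and>
     (\<forall>f::nat \<Rightarrow> 'a. (\<forall>e>0. \<exists>N. \<forall>m\<ge>N. \<forall>k\<ge>N. nm (f m - f k) < e)
         \<longrightarrow> (\<exists>L. (\<lambda>k. nm (f k - L)) \<longlonglongrightarrow> 0)) \<and>
     \<comment> \<open>faithful tracial state\<close>
     (\<forall>a b. tau (a + b) = tau a + tau b) \<and>
     (\<forall>c a. tau (sc c a) = c * tau a) \<and>
     tau 1 = 1 \<and>
     (\<forall>a. tau (st a * a) \<in> \<real> \<and> 0 \<le> Re (tau (st a * a))) \<and>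
     (\<forall>a b. tau (a * b) = tau (b * a)) \<and>
     (\<forall>a. tau (st a * a) = 0 \<longrightarrow> a = 0)"

definition peval :: "(complex \<Rightarrow> 'a::ring_1 \<Rightarrow> 'a) \<Rightarrow> complex poly \<Rightarrow> 'a \<Rightarrow> 'a" where
  "peval sc p a = (\<Sum>k\<le>degree p. sc (coeff p k) (a ^ k))"

definition catalan :: "nat \<Rightarrow> nat" where
  "catalan m = ((2 * m) choose m) div (m + 1)"

definition std_semicircular ::
  "(complex \<Rightarrow> 'a::ring_1 \<Rightarrow> 'a) \<Rightarrow> ('a \<Rightarrow> 'a) \<Rightarrow> ('a \<Rightarrow> complex) \<Rightarrow> 'a \<Rightarrow> bool" where
  "std_semicircular sc st tau s \<longleftrightarrow> st s = s \<and>
     (\<forall>k. tau (s ^ k) = (if even k then of_nat (catalan (k div 2)) else 0))"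

definition free_family ::
  "(complex \<Rightarrow> 'a::ring_1 \<Rightarrow> 'a) \<Rightarrow> ('a \<Rightarrow> complex) \<Rightarrow> 'i set \<Rightarrow> ('i \<Rightarrow> 'a) \<Rightarrow> bool" where
  "free_family sc tau I x \<longleftrightarrow>
     (\<forall>m::nat. \<forall>(idx::nat \<Rightarrow> 'i) (p::nat \<Rightarrow> complex poly).
        1 \<le> m \<and> (\<forall>j<m. idx j \<in> I) \<and> (\<forall>j. Suc j < m \<longrightarrow> idx j \<noteq> idx (Suc j)) \<and>
        (\<forall>j<m. tau (peval sc (p j) (x (idx j))) = 0)
        \<longrightarrow> tau (prod_list (map (\<lambda>j. peval sc (p j) (x (idx j))) [0..<m])) = 0)"

text \<open>Elements of M_d(C) \<otimes> A are represented as d x d matrices with entries in A.\<close>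
definition mmul :: "('d::finite \<Rightarrow> 'd \<Rightarrow> 'a::ring_1) \<Rightarrow> ('d \<Rightarrow> 'd \<Rightarrow> 'a) \<Rightarrow> 'd \<Rightarrow> 'd \<Rightarrow> 'a" where
  "mmul M N = (\<lambda>i j. \<Sum>k\<in>UNIV. M i k * N k j)"

definition mone :: "'d::finite \<Rightarrow> 'd \<Rightarrow> 'a::ring_1" where
  "mone = (\<lambda>i j. if i = j then 1 else 0)"

primrec mpow :: "('d::finite \<Rightarrow> 'd \<Rightarrow> 'a::ring_1) \<Rightarrow> nat \<Rightarrow> 'd \<Rightarrow> 'd \<Rightarrow> 'a" where
  "mpow M 0 = mone"
| "mpow M (Suc k) = mmul (mpow M k) M"

definition tens1 :: "(complex \<Rightarrow> 'a::ring_1 \<Rightarrow> 'a) \<Rightarrow> complex^'d^'d \<Rightarrow> 'd::finite \<Rightarrow> 'd \<Rightarrow> 'a" where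
  "tens1 sc B = (\<lambda>i j. sc (B $ i $ j) 1)"

definition ptrace :: "('a \<Rightarrow> complex) \<Rightarrow> ('d::finite \<Rightarrow> 'd \<Rightarrow> 'a) \<Rightarrow> complex^'d^'d" where
  "ptrace tau M = (\<chi> i j. tau (M i j))"

definition Xfree :: "(complex \<Rightarrow> 'a::ring_1 \<Rightarrow> 'a) \<Rightarrow> (nat \<Rightarrow> complex^'d^'d) \<Rightarrow> (nat \<Rightarrow> 'a) \<Rightarrow> nat
    \<Rightarrow> 'd::finite \<Rightarrow> 'd \<Rightarrow> 'a" where
  "Xfree sc A s n = (\<lambda>i j. sc (A 0 $ i $ j) 1 + (\<Sum>k=1..n. sc (A k $ i $ j) (s k)))"

end

(*
  Joint moments of a free family of standard semicirculars coincide with the vacuum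
  moments of the operators l_i + l_i^* on the full Fock space: both functionals vanish on
  products of centred powers s_i^k - m_k (m_k the semicircle moments) along alternating
  runs of letters (by freeness, resp. because such a product maps the vacuum to vectors
  without vacuum component), and these products determine all moments by induction on the
  length of a word. On the Fock space, following the annihilation of the last letter gives
  the Schwinger-Dyson equation
    tau(s_w s_i) = sum over the occurrences of i in w of tau(prefix) tau(suffix).
  Expanding X^p as a sum of A_w (x) s_w over words w, with s_0 = 1, the partial trace turns
  this scalar identity into the stated matrix recursions.
*)

theory Submission
  imports Defs
begin

section \<open>The Schwinger-Dyson equation on the full Fock space\<close>

definition occurrence_sum ::
    "'a \<Rightarrow> ('a list \<Rightarrow> 'b::semiring_0) \<Rightarrow> ('a list \<Rightarrow> 'b) \<Rightarrow> 'a list \<Rightarrow> 'b" where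
  "occurrence_sum i f g w =
     (\<Sum>l<length w. if w ! l = i then f (take l w) * g (drop (Suc l) w) else 0)"

lemma occurrence_sum_Nil [simp]: "occurrence_sum i f g [] = 0"
  by (simp add: occurrence_sum_def)

lemma occurrence_sum_Cons:
  "occurrence_sum i f g (y # u) =
     (if y = i then f [] * g u else 0) + occurrence_sum i (\<lambda>a. f (y # a)) g u"
  unfolding occurrence_sum_def length_Cons sum.lessThan_Suc_shift by (simp cong: if_cong)

lemma occurrence_sum_add_left:
  "occurrence_sum i (\<lambda>a. f a + f' a) g w = occurrence_sum i f g w + occurrence_sum i f' g w"
  unfolding occurrence_sum_def
  by (simp add: sum.distrib[symmetric] distrib_right if_distrib cong: if_cong)

lemma occurrence_sum_mult_left:
  "occurrence_sum i (\<lambda>a. c * f a) g w = c * occurrence_sum i f g w"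
  unfolding occurrence_sum_def by (auto simp: sum_distrib_left mult.assoc intro!: sum.cong)

lemma occurrence_sum_append:
  "occurrence_sum i f g (u @ v) =
     occurrence_sum i f (\<lambda>b. g (b @ v)) u + occurrence_sum i (\<lambda>a. f (u @ a)) g v"
proof (induction u arbitrary: f)
  case (Cons y u)
  show ?case using Cons[of "\<lambda>a. f (y # a)"] by (simp add: occurrence_sum_Cons add.assoc)
qed simp

lemma occurrence_sum_snoc:
  "occurrence_sum i f g (u @ [x]) =
     occurrence_sum i f (\<lambda>b. g (b @ [x])) u + (if x = i then f u * g [] else 0)"
  by (simp add: occurrence_sum_append occurrence_sum_Cons)

lemma occurrence_sum_nested:
  "occurrence_sum i f (occurrence_sum x g h) u = occurrence_sum x (occurrence_sum i f g) h u"
proof (induction u arbitrary: f)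
  case (Cons y u)
  have "occurrence_sum x (occurrence_sum i f g) h (y # u) =
      occurrence_sum x (\<lambda>a. (if y = i then f [] else 0) * g a
        + occurrence_sum i (\<lambda>a. f (y # a)) g a) h u"
    by (simp add: occurrence_sum_Cons)
  also have "\<dots> = (if y = i then f [] else 0) * occurrence_sum x g h u
      + occurrence_sum x (occurrence_sum i (\<lambda>a. f (y # a)) g) h u"
    by (simp add: occurrence_sum_add_left occurrence_sum_mult_left)
  finally show ?case using Cons[of "\<lambda>a. f (y # a)"] by (simp add: occurrence_sum_Cons)
qed simp

lemma occurrence_sum_cong:
  assumes "\<And>a. length a < length w \<Longrightarrow> set a \<subseteq> set w \<Longrightarrow> f a = f' a"
    and "\<And>b. length b < length w \<Longrightarrow> set b \<subseteq> set w \<Longrightarrow> g b = g' b"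
  shows "occurrence_sum i f g w = occurrence_sum i f' g' w"
  unfolding occurrence_sum_def
proof (intro sum.cong refl)
  fix l assume "l \<in> {..<length w}"
  then have "f (take l w) = f' (take l w)" and "g (drop (Suc l) w) = g' (drop (Suc l) w)"
    using assms set_take_subset[of l w] set_drop_subset[of "Suc l" w] by auto
  then show "(if w ! l = i then f (take l w) * g (drop (Suc l) w) else 0) =
      (if w ! l = i then f' (take l w) * g' (drop (Suc l) w) else 0)"
    by simp
qed

lemma occurrence_sum_filter:
  assumes "P i"
  shows "occurrence_sum i (\<lambda>a. f (filter P a)) (\<lambda>b. g (filter P b)) w =
    occurrence_sum i f g (filter P w)"
proof (induction w arbitrary: f)
  case (Cons y u)
  show ?case
    using Cons.IH[of "\<lambda>a. f (y # a)"] Cons.IH[of f] assms by (auto simp: occurrence_sum_Cons)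
qed simp

text \<open>The full Fock space over the letters is modelled by coefficient functions on words.
fock_sc i is the free semicircular operator \<open>l\<^sub>i + l\<^sub>i\<^sup>*\<close>: the first summand
is the annihilation, the second the creation of the letter i; vacuum_moment w is the
vacuum expectation of the product of these operators along w.\<close>

definition fock_sc :: "'a \<Rightarrow> ('a list \<Rightarrow> complex) \<Rightarrow> 'a list \<Rightarrow> complex" where
  "fock_sc i f =
     (\<lambda>y. f (i # y) + (case y of [] \<Rightarrow> 0 | j # y' \<Rightarrow> if j = i then f y' else 0))"

definition fock_word :: "'a list \<Rightarrow> ('a list \<Rightarrow> complex) \<Rightarrow> 'a list \<Rightarrow> complex" where
  "fock_word w = foldr fock_sc w"

definition fock_basis :: "'a list \<Rightarrow> 'a list \<Rightarrow> complex" where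
  "fock_basis v = (\<lambda>y. if y = v then 1 else 0)"

definition vacuum_moment :: "'a list \<Rightarrow> complex" where
  "vacuum_moment w = fock_word w (fock_basis []) []"

lemma fock_word_Nil [simp]: "fock_word [] f = f"
  and fock_word_Cons: "fock_word (i # w) f = fock_sc i (fock_word w f)"
  and fock_word_append: "fock_word (u @ v) f = fock_word u (fock_word v f)"
  by (simp_all add: fock_word_def)

lemma vacuum_moment_Nil [simp]: "vacuum_moment [] = 1"
  by (simp add: vacuum_moment_def fock_basis_def)

lemma fock_word_add: "fock_word w (\<lambda>y. f y + g y) = (\<lambda>y. fock_word w f y + fock_word w g y)"
  by (induction w) (auto simp: fock_word_Cons fock_sc_def split: list.split)

lemma fock_word_mult: "fock_word w (\<lambda>y. c * f y) = (\<lambda>y. c * fock_word w f y)"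
  by (induction w) (auto simp: fock_word_Cons fock_sc_def algebra_simps split: list.split)

lemma fock_word_zero: "fock_word w (\<lambda>_. 0) = (\<lambda>_. 0)"
  by (induction w) (auto simp: fock_word_Cons fock_sc_def split: list.split)

lemma fock_word_sum_list:
  "fock_word w (\<lambda>y. \<Sum>p\<leftarrow>L. h p y) y' = (\<Sum>p\<leftarrow>L. fock_word w (h p) y')"
  by (induction L arbitrary: y') (simp_all add: fock_word_zero fock_word_add)

lemma fock_word_snoc_basis:
  "fock_word (u @ [x]) (fock_basis v) =
     (\<lambda>y. fock_word u (fock_basis (x # v)) y
        + (if v \<noteq> [] \<and> hd v = x then fock_word u (fock_basis (tl v)) y else 0))"
proof -
  have "fock_sc x (fock_basis v) =
      (\<lambda>y. fock_basis (x # v) y + (if v \<noteq> [] \<and> hd v = x then 1 else 0) * fock_basis (tl v) y)"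
    unfolding fock_sc_def fock_basis_def by (rule ext) (cases v; auto split: list.split)
  then show ?thesis by (simp add: fock_word_append fock_word_Cons fock_word_add fock_word_mult)
qed

text \<open>The leading letter i of the basis vector e_(i # v) is annihilated by one occurrence
of i in w: the letters after that occurrence, which act first, must return to e_(i # v) on
their own, and the letters before it act on e_v.\<close>

lemma fock_word_basis_Cons:
  "fock_word w (fock_basis (i # v)) [] =
     occurrence_sum i (\<lambda>u. fock_word u (fock_basis v) []) vacuum_moment w"
proof (induction "length w" arbitrary: w i v rule: less_induct)
  case less
  show ?case
  proof (cases w rule: rev_cases)
    case Nil
    then show ?thesis by (simp add: fock_basis_def)
  next
    case (snoc u x)
    have IH: "fock_word b (fock_basis (i # v)) [] =
        occurrence_sum i (\<lambda>a. fock_word a (fock_basis v) []) vacuum_moment b"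
      if "length b \<le> length u" for b :: "'a list" and i v
      using less.hyps[of b i v] that snoc by simp
    have snoc_moment: "vacuum_moment (b @ [x]) = occurrence_sum x vacuum_moment vacuum_moment b"
      if "length b < length u" for b
      using IH[of b x "[]"] that unfolding vacuum_moment_def fock_word_snoc_basis by simp
    let ?g = "\<lambda>a. fock_word a (fock_basis v) []"
    have "fock_word w (fock_basis (i # v)) [] =
        fock_word u (fock_basis (x # i # v)) [] + (if x = i then ?g u else 0)"
      using snoc by (simp add: fock_word_snoc_basis)
    also have "fock_word u (fock_basis (x # i # v)) [] =
        occurrence_sum x (occurrence_sum i ?g vacuum_moment) vacuum_moment u"
      using IH by (auto intro: occurrence_sum_cong)
    also have "\<dots> = occurrence_sum i ?g (occurrence_sum x vacuum_moment vacuum_moment) u"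
      by (rule occurrence_sum_nested[symmetric])
    also have "\<dots> = occurrence_sum i ?g (\<lambda>b. vacuum_moment (b @ [x])) u"
      by (rule occurrence_sum_cong) (simp_all add: snoc_moment)
    finally show ?thesis
      using snoc by (simp add: occurrence_sum_snoc)
  qed
qed

theorem vacuum_moment_snoc:
  "vacuum_moment (w @ [i]) = occurrence_sum i vacuum_moment vacuum_moment w"
proof -
  have "vacuum_moment (w @ [i]) = fock_word w (fock_basis [i]) []"
    by (simp add: vacuum_moment_def fock_word_snoc_basis)
  also have "\<dots> = occurrence_sum i vacuum_moment vacuum_moment w"
    using fock_word_basis_Cons[of w i "[]"] by (simp only: vacuum_moment_def[symmetric])
  finally show ?thesis .
qed

section \<open>Moments of a single letter\<close>

definition semicircle_moment :: "nat \<Rightarrow> complex" where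
  "semicircle_moment k = (if even k then of_nat (catalan (k div 2)) else 0)"

text \<open>By the reflection principle, ballot k j counts the paths of k steps \<open>\<plusminus>1\<close>
from height 0 to height k - 2j that never go below 0.\<close>

definition ballot :: "nat \<Rightarrow> nat \<Rightarrow> int" where
  "ballot k j = int (k choose j) - (if j = 0 then 0 else int (k choose (j - 1)))"

lemma ballot_0 [simp]: "ballot k 0 = 1"
  by (simp add: ballot_def)

lemma ballot_Suc: "0 < j \<Longrightarrow> ballot (Suc k) j = ballot k j + ballot k (j - 1)"
  by (cases j; cases "j - 1") (simp_all add: ballot_def)

lemma ballot_odd_middle: "ballot (Suc (2 * t)) (Suc t) = 0"
  using binomial_symmetric[of "Suc t" "Suc (2 * t)"] by (simp add: ballot_def)

lemma ballot_catalan: "ballot (2 * m) m = int (catalan m)"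
proof (cases m)
  case (Suc t)
  define a where "a = 2 * m choose m"
  define b where "b = 2 * m choose t"
  have m2: "2 * m = Suc (t + Suc t)"
    using Suc by simp
  have ab: "m * a = (m + 1) * b"
    using Suc_times_binomial_add[of t "Suc t"] Suc unfolding a_def b_def m2 by simp
  then have "m * b \<le> m * a"
    by simp
  then have "b \<le> a"
    using Suc mult_le_cancel1 by blast
  then have "(m + 1) * a = (m + 1) * (a - b) + (m + 1) * b"
    by (simp add: add_mult_distrib2[symmetric])
  then have "a = (m + 1) * (a - b)"
    using ab by simp
  then have "catalan m = a - b"
    by (metis catalan_def a_def div_mult_self1_is_m zero_less_Suc Suc_eq_plus1 mult.commute)
  then show ?thesis
    using Suc \<open>b \<le> a\<close> by (simp add: ballot_def a_def b_def of_nat_diff)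
qed (simp add: catalan_def)

lemma fock_word_replicate_Suc:
  "fock_word (replicate (Suc k) i) (fock_basis []) (replicate h i) =
     fock_word (replicate k i) (fock_basis []) (replicate (Suc h) i)
     + (case h of 0 \<Rightarrow> 0 | Suc h' \<Rightarrow> fock_word (replicate k i) (fock_basis []) (replicate h' i))"
  by (cases h) (simp_all add: fock_word_Cons fock_sc_def)

lemma fock_word_replicate:
  "fock_word (replicate k i) (fock_basis []) (replicate h i) =
     (if h \<le> k \<and> even (k - h) then of_int (ballot k ((k - h) div 2)) else 0)"
proof (induction k arbitrary: h)
  case 0
  then show ?case by (cases h) (simp_all add: fock_basis_def)
next
  case (Suc k)
  show ?case
  proof (cases h)
    case 0
    have "fock_word (replicate (Suc k) i) (fock_basis []) (replicate h i) =
        (if 1 \<le> k \<and> even (k - 1) then of_int (ballot k ((k - 1) div 2)) else 0)"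
      using 0 fock_word_replicate_Suc[of k i 0] Suc.IH[of 1] by simp
    also have "\<dots> = (if even (Suc k) then of_int (ballot (Suc k) (Suc k div 2)) else 0)"
    proof (cases "even k")
      case False
      then obtain t where t: "k = Suc (2 * t)"
        by (metis oddE add.commute plus_1_eq_Suc)
      then show ?thesis
        using ballot_Suc[of "Suc t" k] ballot_odd_middle[of t] by simp
    qed (cases k; simp)
    finally show ?thesis using 0 by simp
  next
    case (Suc h')
    have "fock_word (replicate (Suc k) i) (fock_basis []) (replicate h i) =
        (if Suc h \<le> k \<and> even (k - Suc h) then of_int (ballot k ((k - Suc h) div 2)) else 0)
        + (if h' \<le> k \<and> even (k - h') then of_int (ballot k ((k - h') div 2)) else 0)"
      using Suc fock_word_replicate_Suc[of k i h] Suc.IH[of "Suc h"] Suc.IH[of h'] by simp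
    also have "\<dots> = (if h \<le> Suc k \<and> even (Suc k - h)
        then of_int (ballot (Suc k) ((Suc k - h) div 2)) else 0)"
    proof (cases "h' \<le> k \<and> even (k - h')")
      case True
      then obtain j where j: "k = h' + 2 * j"
        by (metis evenE le_add_diff_inverse)
      then show ?thesis
        using Suc ballot_Suc[of j k] by (cases j) (simp_all add: algebra_simps)
    qed (use Suc in auto)
    finally show ?thesis .
  qed
qed

theorem vacuum_moment_replicate: "vacuum_moment (replicate k i) = semicircle_moment k"
  using fock_word_replicate[of k i 0] ballot_catalan[of "k div 2"]
  by (auto simp: vacuum_moment_def semicircle_moment_def elim!: evenE)

section \<open>Freeness of the Fock space model\<close>

fun runs :: "'a list \<Rightarrow> ('a \<times> nat) list" where
  "runs [] = []"
| "runs (x # w) =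
     (case runs w of
        [] \<Rightarrow> [(x, 1)]
      | (y, k) # r \<Rightarrow> if x = y then (y, Suc k) # r else (x, 1) # (y, k) # r)"

definition expand_runs :: "('a \<times> nat) list \<Rightarrow> 'a list" where
  "expand_runs bs = concat (map (\<lambda>(i, k). replicate k i) bs)"

lemma expand_runs_Nil [simp]: "expand_runs [] = []"
  and expand_runs_Cons [simp]: "expand_runs ((i, k) # bs) = replicate k i @ expand_runs bs"
  by (simp_all add: expand_runs_def)

lemma expand_runs_runs [simp]: "expand_runs (runs w) = w"
  by (induction w) (auto split: list.split prod.split)

lemma runs_eq_Nil_iff [simp]: "runs w = [] \<longleftrightarrow> w = []"
  by (cases w) (auto split: list.split prod.split)

lemma runs_positive: "b \<in> set (runs w) \<Longrightarrow> 0 < snd b"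
  by (induction w arbitrary: b) (auto split: list.splits prod.splits if_splits)

lemma distinct_adj_runs: "distinct_adj (map fst (runs w))"
  by (induction w) (auto simp: distinct_adj_Cons split: list.split prod.split)

fun centered_vector :: "('a \<times> nat) list \<Rightarrow> 'a list \<Rightarrow> complex" where
  "centered_vector [] = fock_basis []"
| "centered_vector ((i, k) # bs) =
     (\<lambda>y. fock_word (replicate k i) (centered_vector bs) y
        - semicircle_moment k * centered_vector bs y)"

lemma fock_word_replicate_shift:
  assumes "\<forall>y. \<xi> (i # y) = 0" and "u = [] \<or> hd u \<noteq> i"
  shows "fock_word (replicate m i) \<xi> (replicate k i @ u) =
    fock_word (replicate m i) (fock_basis []) (replicate k i) * \<xi> u"
proof (induction m arbitrary: k)
  case 0
  show ?case using assms by (cases k) (simp_all add: fock_basis_def)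
next
  case (Suc m)
  have "fock_word (replicate (Suc m) i) \<xi> (replicate k i @ u) =
      fock_word (replicate m i) \<xi> (replicate (Suc k) i @ u)
      + (case k of 0 \<Rightarrow> 0 | Suc k' \<Rightarrow> fock_word (replicate m i) \<xi> (replicate k' i @ u))"
    using assms(2) by (cases k; cases u) (auto simp: fock_word_Cons fock_sc_def)
  then show ?case
    using Suc.IH[of "Suc k"] Suc.IH[of "k - 1"] fock_word_replicate_Suc[of m i k]
    by (cases k) (simp_all add: algebra_simps)
qed

lemma centered_vector_vanishes:
  assumes "bs \<noteq> []" and "distinct_adj (map fst bs)" and "y = [] \<or> hd y \<noteq> fst (hd bs)"
  shows "centered_vector bs y = 0"
  using assms
proof (induction bs arbitrary: y)
  case (Cons b bs)
  obtain i k where b: "b = (i, k)"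
    by force
  have "centered_vector bs (i # z) = 0" for z
  proof (cases bs)
    case (Cons b' bs')
    then show ?thesis
      using Cons.IH[of "i # z"] Cons.prems b by (auto simp: distinct_adj_Cons)
  qed (simp add: fock_basis_def)
  then have "fock_word (replicate k i) (centered_vector bs) (replicate 0 i @ y) =
      fock_word (replicate k i) (fock_basis []) (replicate 0 i) * centered_vector bs y"
    using Cons.prems b by (intro fock_word_replicate_shift) auto
  then show ?case
    using b by (simp add: vacuum_moment_def[symmetric] vacuum_moment_replicate)
qed simp

text \<open>A noncommutative polynomial is encoded as a list of coefficient-word pairs;
centered_expansion bs is the expansion of the product of the centered powers
\<open>x\<^sub>i\<^sup>k - m\<^sub>k\<close> along the runs bs.\<close>

fun centered_expansion :: "('a \<times> nat) list \<Rightarrow> (complex \<times> 'a list) list" where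
  "centered_expansion [] = [(1, [])]"
| "centered_expansion ((i, k) # bs) =
     map (\<lambda>(c, w). (c, replicate k i @ w)) (centered_expansion bs)
     @ map (\<lambda>(c, w). (- semicircle_moment k * c, w)) (centered_expansion bs)"

lemma centered_vector_expansion:
  "centered_vector bs y = (\<Sum>(c, w)\<leftarrow>centered_expansion bs. c * fock_word w (fock_basis []) y)"
proof (induction bs arbitrary: y)
  case (Cons b bs)
  obtain i k where b: "b = (i, k)"
    by force
  have "centered_vector bs = (\<lambda>y. \<Sum>(c, w)\<leftarrow>centered_expansion bs. c * fock_word w (fock_basis []) y)"
    using Cons.IH by auto
  then have "fock_word (replicate k i) (centered_vector bs) y =
      (\<Sum>(c, w)\<leftarrow>centered_expansion bs. c * fock_word (replicate k i @ w) (fock_basis []) y)"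
    by (simp add: fock_word_sum_list case_prod_unfold fock_word_mult fock_word_append)
  then show ?case
    using b Cons.IH
    by (simp add: comp_def case_prod_unfold sum_list_const_mult[symmetric] mult.assoc
        uminus_sum_list_map)
qed simp

lemma centered_expansion_head:
  obtains r where "centered_expansion bs = (1, expand_runs bs) # r"
proof -
  have "\<exists>r. centered_expansion bs = (1, expand_runs bs) # r"
    by (induction bs) auto
  then show ?thesis
    using that by blast
qed

lemma centered_expansion_words:
  "p \<in> set (centered_expansion bs) \<Longrightarrow>
     length (snd p) \<le> length (expand_runs bs) \<and> set (snd p) \<subseteq> set (expand_runs bs)"
  by (induction bs arbitrary: p) fastforce+

lemma centered_expansion_tl_shorter:
  assumes "\<forall>b\<in>set bs. 0 < snd b" and "p \<in> set (tl (centered_expansion bs))"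
  shows "length (snd p) < length (expand_runs bs)"
  using assms
proof (induction bs arbitrary: p)
  case (Cons b bs)
  obtain i k where b: "b = (i, k)"
    by force
  obtain r where r: "centered_expansion bs = (1, expand_runs bs) # r"
    by (rule centered_expansion_head)
  show ?case
    using Cons r b centered_expansion_words[of _ bs] by fastforce
qed simp

text \<open>Freeness in the Fock model: the centered vector has no vacuum component.\<close>

theorem vacuum_moment_centered_expansion:
  assumes "bs \<noteq> []" and "distinct_adj (map fst bs)"
  shows "(\<Sum>(c, w)\<leftarrow>centered_expansion bs. c * vacuum_moment w) = 0"
  using centered_vector_vanishes[OF assms, of "[]"]
  by (simp add: centered_vector_expansion vacuum_moment_def)

lemma moments_eq_if_centered_expansions_eq:
  fixes \<mu> \<nu> :: "'a list \<Rightarrow> complex"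
  assumes "\<mu> [] = \<nu> []"
    and "\<And>bs. bs \<noteq> [] \<Longrightarrow> distinct_adj (map fst bs) \<Longrightarrow> \<forall>b\<in>set bs. 0 < snd b \<Longrightarrow>
      set (expand_runs bs) \<subseteq> I \<Longrightarrow>
      (\<Sum>(c, w)\<leftarrow>centered_expansion bs. c * \<mu> w) = (\<Sum>(c, w)\<leftarrow>centered_expansion bs. c * \<nu> w)"
    and "set w \<subseteq> I"
  shows "\<mu> w = \<nu> w"
  using assms(3)
proof (induction "length w" arbitrary: w rule: less_induct)
  case less
  show ?case
  proof (cases "w = []")
    case False
    obtain r where r: "centered_expansion (runs w) = (1, w) # r"
      using centered_expansion_head[of "runs w"] by auto
    have "p \<in> set r \<Longrightarrow> \<mu> (snd p) = \<nu> (snd p)" for p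
      using less centered_expansion_words[of p "runs w"]
        centered_expansion_tl_shorter[of "runs w" p] r runs_positive[of _ w] by auto
    then have "(\<Sum>(c, w)\<leftarrow>r. c * \<mu> w) = (\<Sum>(c, w)\<leftarrow>r. c * \<nu> w)"
      by (intro arg_cong[where f = sum_list] map_cong) (auto simp: case_prod_unfold)
    moreover have "(\<Sum>(c, w)\<leftarrow>(1, w) # r. c * \<mu> w) = (\<Sum>(c, w)\<leftarrow>(1, w) # r. c * \<nu> w)"
      using assms(2)[of "runs w"] r False less.prems runs_positive[of _ w] distinct_adj_runs[of w]
      by simp
    ultimately show ?thesis
      by simp
  qed (use assms(1) in simp)
qed

section \<open>Free semicircular families\<close>

definition word_prod :: "('i \<Rightarrow> 'a::monoid_mult) \<Rightarrow> 'i list \<Rightarrow> 'a" where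
  "word_prod s w = prod_list (map s w)"

lemma word_prod_Nil [simp]: "word_prod s [] = 1"
  and word_prod_Cons [simp]: "word_prod s (x # w) = s x * word_prod s w"
  and word_prod_append: "word_prod s (u @ v) = word_prod s u * word_prod s v"
  and word_prod_replicate [simp]: "word_prod s (replicate k i) = s i ^ k"
  by (simp_all add: word_prod_def prod_list_replicate)

locale algebra_with_state =
  fixes sc :: "complex \<Rightarrow> 'a::ring_1 \<Rightarrow> 'a" and tau :: "'a \<Rightarrow> complex"
  assumes scale_one [simp]: "sc 1 a = a"
    and scale_scale: "sc c (sc e a) = sc (c * e) a"
    and scale_add_right: "sc c (a + b) = sc c a + sc c b"
    and scale_add_left: "sc (c + e) a = sc c a + sc e a"
    and scale_mult_left: "sc c a * b = sc c (a * b)"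
    and scale_mult_right: "a * sc c b = sc c (a * b)"
    and tau_add: "tau (a + b) = tau a + tau b"
    and tau_scale: "tau (sc c a) = c * tau a"
    and tau_one [simp]: "tau 1 = 1"

lemma cstar_prob_space_imp_algebra_with_state:
  "cstar_prob_space sc st nm tau \<Longrightarrow> algebra_with_state sc tau"
  unfolding cstar_prob_space_def by unfold_locales metis+

context algebra_with_state
begin

lemma scale_zero_left [simp]: "sc 0 a = 0"
  using scale_add_left[of 0 0 a] by simp

lemma scale_zero_right [simp]: "sc c 0 = 0"
  using scale_add_right[of c 0 0] by simp

lemma scale_minus_left: "sc (- c) a = - sc c a"
  using scale_add_left[of c "- c" a] by (simp add: eq_neg_iff_add_eq_0 add.commute)

lemma scale_diff_left: "sc (c - e) a = sc c a - sc e a"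
  using scale_add_left[of c "- e" a] scale_minus_left[of e a] by simp

lemma scale_sum_left: "sc (\<Sum>x\<in>S. f x) a = (\<Sum>x\<in>S. sc (f x) a)"
  by (induction S rule: infinite_finite_induct) (simp_all add: scale_add_left)

lemma scale_mult_scale: "sc c a * sc e b = sc (c * e) (a * b)"
  by (simp add: scale_mult_left scale_mult_right scale_scale mult.commute)

lemma tau_zero [simp]: "tau 0 = 0"
  using tau_add[of 0 0] by simp

lemma tau_diff: "tau (a - b) = tau a - tau b"
  using tau_add[of "a - b" b] by simp

lemma tau_sum_list: "tau (\<Sum>x\<leftarrow>L. f x) = (\<Sum>x\<leftarrow>L. tau (f x))"
  by (induction L) (simp_all add: tau_add)

lemma tau_sum: "tau (\<Sum>x\<in>S. f x) = (\<Sum>x\<in>S. tau (f x))"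
  by (induction S rule: infinite_finite_induct) (simp_all add: tau_add)

lemma peval_monom_minus_const:
  assumes "0 < k"
  shows "peval sc (monom 1 k - [:c:]) x = x ^ k - sc c 1"
proof -
  let ?p = "monom 1 k - [:c:] :: complex poly"
  have coeff: "coeff ?p j = (if k = j then 1 else 0) - (if j = 0 then c else 0)" for j
    by (cases j) (simp_all add: coeff_monom)
  have "degree ?p = k"
  proof (rule antisym)
    show "degree ?p \<le> k"
      by (rule degree_diff_le) (simp_all add: degree_monom_le assms)
    show "k \<le> degree ?p"
      using coeff[of k] assms by (intro le_degree) simp
  qed
  then have "peval sc ?p x =
      (\<Sum>j\<le>k. sc ((if k = j then 1 else 0) - (if j = 0 then c else 0)) (x ^ j))"
    unfolding peval_def coeff by simp
  also have "\<dots> = (\<Sum>j\<le>k. (if k = j then x ^ j else 0) - (if j = 0 then sc c 1 else 0))"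
    by (intro sum.cong refl) (simp add: scale_diff_left)
  also have "\<dots> = x ^ k - sc c 1"
    by (simp add: sum_subtractf)
  finally show ?thesis .
qed

definition eval_expansion :: "('i \<Rightarrow> 'a) \<Rightarrow> (complex \<times> 'i list) list \<Rightarrow> 'a" where
  "eval_expansion s P = (\<Sum>(c, w)\<leftarrow>P. sc c (word_prod s w))"

lemma eval_expansion_prefix:
  "word_prod s u * eval_expansion s P = eval_expansion s (map (\<lambda>(c, w). (c, u @ w)) P)"
  by (induction P) (auto simp: eval_expansion_def distrib_left scale_mult_right word_prod_append)

lemma eval_expansion_scale:
  "sc e (eval_expansion s P) = eval_expansion s (map (\<lambda>(c, w). (e * c, w)) P)"
  by (induction P) (auto simp: eval_expansion_def scale_add_right scale_scale)

lemma eval_expansion_neg: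
  "- eval_expansion s P = eval_expansion s (map (\<lambda>(c, w). (- c, w)) P)"
  by (induction P) (auto simp: eval_expansion_def scale_minus_left)

lemma tau_eval_expansion:
  "tau (eval_expansion s P) = (\<Sum>(c, w)\<leftarrow>P. c * tau (word_prod s w))"
  by (simp add: eval_expansion_def tau_sum_list case_prod_unfold tau_scale)

lemma prod_centered_powers:
  "prod_list (map (\<lambda>(i, k). s i ^ k - sc (semicircle_moment k) 1) bs) =
     eval_expansion s (centered_expansion bs)"
proof (induction bs)
  case Nil
  then show ?case by (simp add: eval_expansion_def)
next
  case (Cons b bs)
  obtain i k where b: "b = (i, k)"
    by force
  let ?P = "centered_expansion bs"
  have "(s i ^ k - sc (semicircle_moment k) 1) * eval_expansion s ?P =
      word_prod s (replicate k i) * eval_expansion s ?P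
      - sc (semicircle_moment k) (eval_expansion s ?P)"
    by (simp add: left_diff_distrib scale_mult_left)
  also have "\<dots> = eval_expansion s (centered_expansion (b # bs))"
    unfolding eval_expansion_prefix eval_expansion_scale diff_conv_add_uminus eval_expansion_neg
    by (simp add: b eval_expansion_def comp_def case_prod_unfold)
  finally show ?case
    using Cons b by simp
qed

end

locale free_semicircular_family = algebra_with_state sc tau
  for sc :: "complex \<Rightarrow> 'a::ring_1 \<Rightarrow> 'a" and tau +
  fixes I :: "'i set" and s :: "'i \<Rightarrow> 'a"
  assumes semicircle_moments: "i \<in> I \<Longrightarrow> tau (s i ^ k) = semicircle_moment k"
    and free: "free_family sc tau I s"
begin

lemma tau_prod_centered_powers:
  assumes "bs \<noteq> []" and "distinct_adj (map fst bs)"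
    and "\<forall>b\<in>set bs. 0 < snd b" and "\<forall>b\<in>set bs. fst b \<in> I"
  shows "tau (prod_list (map (\<lambda>(i, k). s i ^ k - sc (semicircle_moment k) 1) bs)) = 0"
proof -
  define idx where "idx j = fst (bs ! j)" for j
  define p where "p j = monom 1 (snd (bs ! j)) - [:semicircle_moment (snd (bs ! j)):]" for j
  have p_eval:
    "peval sc (p j) (s (idx j)) = (\<lambda>(i, k). s i ^ k - sc (semicircle_moment k) 1) (bs ! j)"
    if "j < length bs" for j
    using that assms(3) unfolding p_def idx_def
    by (simp add: case_prod_unfold peval_monom_minus_const)
  have "tau (prod_list (map (\<lambda>j. peval sc (p j) (s (idx j))) [0..<length bs])) = 0"
  proof (rule free[unfolded free_family_def, rule_format], intro conjI allI impI)
    show "1 \<le> length bs"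
      using assms(1) by (simp add: Suc_le_eq)
    fix j
    show "j < length bs \<Longrightarrow> idx j \<in> I"
      using assms(4) unfolding idx_def by auto
    show "Suc j < length bs \<Longrightarrow> idx j \<noteq> idx (Suc j)"
      using distinct_adj_nth[OF assms(2), of j] unfolding idx_def by simp
    assume "j < length bs"
    then show "tau (peval sc (p j) (s (idx j))) = 0"
      using p_eval assms(4) semicircle_moments
      by (simp add: case_prod_unfold tau_diff tau_scale idx_def)
  qed
  moreover have "map (\<lambda>j. peval sc (p j) (s (idx j))) [0..<length bs] =
      map (\<lambda>(i, k). s i ^ k - sc (semicircle_moment k) 1) bs"
    by (rule nth_equalityI) (simp_all add: p_eval)
  ultimately show ?thesis
    by simp
qed

text \<open>tau and the vacuum state agree on all centered expansions, where both vanish (by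
freeness, resp. by vacuum_moment_centered_expansion), and these determine all moments.\<close>

theorem tau_word_prod: "set w \<subseteq> I \<Longrightarrow> tau (word_prod s w) = vacuum_moment w"
proof (rule moments_eq_if_centered_expansions_eq)
  fix bs :: "('i \<times> nat) list"
  assume bs: "bs \<noteq> []" "distinct_adj (map fst bs)" "\<forall>b\<in>set bs. 0 < snd b"
    and letters: "set (expand_runs bs) \<subseteq> I"
  have "\<forall>b\<in>set bs. fst b \<in> I"
    using bs(3) letters by (force simp: expand_runs_def)
  then have "(\<Sum>(c, w)\<leftarrow>centered_expansion bs. c * tau (word_prod s w)) = 0"
    using tau_prod_centered_powers[OF bs] by (simp add: prod_centered_powers tau_eval_expansion)
  also have "\<dots> = (\<Sum>(c, w)\<leftarrow>centered_expansion bs. c * vacuum_moment w)"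
    using vacuum_moment_centered_expansion[OF bs(1,2)] by simp
  finally show "(\<Sum>(c, w)\<leftarrow>centered_expansion bs. c * tau (word_prod s w)) =
      (\<Sum>(c, w)\<leftarrow>centered_expansion bs. c * vacuum_moment w)" .
qed simp

text \<open>The Schwinger-Dyson equation, for words in which an extra letter \<open>e\<close> stands
for the unit.\<close>

theorem tau_word_prod_snoc:
  assumes "e \<notin> I" and "i \<in> I" and "set w \<subseteq> insert e I"
  shows "tau (word_prod (s(e := 1)) w * s i) =
    occurrence_sum i (\<lambda>u. tau (word_prod (s(e := 1)) u)) (\<lambda>u. tau (word_prod (s(e := 1)) u)) w"
proof -
  let ?P = "\<lambda>j. j \<noteq> e"
  have unit_letter: "word_prod (s(e := 1)) u = word_prod s (filter ?P u)" for u
    by (induction u) auto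
  have letters: "set (filter ?P w) \<subseteq> I"
    using assms(3) by auto
  have "tau (word_prod (s(e := 1)) w * s i) = vacuum_moment (filter ?P w @ [i])"
    using letters assms(2) by (simp add: unit_letter word_prod_append tau_word_prod[symmetric])
  also have "\<dots> = occurrence_sum i vacuum_moment vacuum_moment (filter ?P w)"
    by (rule vacuum_moment_snoc)
  also have "\<dots> = occurrence_sum i (\<lambda>u. tau (word_prod s u)) (\<lambda>u. tau (word_prod s u)) (filter ?P w)"
    using letters by (intro occurrence_sum_cong) (auto simp: tau_word_prod)
  also have "\<dots> =
      occurrence_sum i (\<lambda>u. tau (word_prod (s(e := 1)) u)) (\<lambda>u. tau (word_prod (s(e := 1)) u)) w"
    unfolding unit_letter using assms(1,2)
    by (intro occurrence_sum_filter[where f = "\<lambda>u. tau (word_prod s u)", symmetric]) auto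
  finally show ?thesis .
qed

end

section \<open>Matrix-valued moments\<close>

lemma mmul_assoc: "mmul (mmul P Q) R = mmul P (mmul Q R)"
proof (intro ext)
  fix a b
  have "mmul (mmul P Q) R a b = (\<Sum>k\<in>UNIV. \<Sum>l\<in>UNIV. P a l * Q l k * R k b)"
    by (simp add: mmul_def sum_distrib_right)
  also have "\<dots> = (\<Sum>l\<in>UNIV. \<Sum>k\<in>UNIV. P a l * (Q l k * R k b))"
    by (subst sum.swap) (simp add: mult.assoc)
  also have "\<dots> = mmul P (mmul Q R) a b"
    by (simp add: mmul_def sum_distrib_left)
  finally show "mmul (mmul P Q) R a b = mmul P (mmul Q R) a b" .
qed

definition scale_mat :: "complex \<Rightarrow> complex^'d^'d \<Rightarrow> complex^'d^'d" where
  "scale_mat c M = (\<chi> a b. c * M $ a $ b)"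

lemma scale_mat_nth [simp]: "scale_mat c M $ a $ b = c * M $ a $ b"
  by (simp add: scale_mat_def)

lemma matrix_mult_nth: "(P ** Q) $ a $ b = (\<Sum>k\<in>UNIV. P $ a $ k * Q $ k $ b)"
  by (simp add: matrix_matrix_mult_def)

lemma matrix_mult_sum_left: "(\<Sum>x\<in>X. P x) ** (Q :: complex^'d^'d) = (\<Sum>x\<in>X. P x ** Q)"
  by (induction X rule: infinite_finite_induct)
    (simp_all add: vec_eq_iff matrix_mult_nth distrib_right sum.distrib)

lemma matrix_mult_sum_right: "(Q :: complex^'d^'d) ** (\<Sum>x\<in>X. P x) = (\<Sum>x\<in>X. Q ** P x)"
  by (induction X rule: infinite_finite_induct) (simp_all add: matrix_add_ldistrib)

lemma scale_mat_mult_left: "scale_mat c P ** Q = scale_mat c (P ** Q)"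
  by (simp add: vec_eq_iff matrix_mult_nth sum_distrib_left mult.assoc)

lemma scale_mat_mult_right: "P ** scale_mat c Q = scale_mat c (P ** Q)"
  by (simp add: vec_eq_iff matrix_mult_nth sum_distrib_left mult_ac)

lemma scale_mat_scale_mat: "scale_mat c (scale_mat e P) = scale_mat (c * e) P"
  by (simp add: vec_eq_iff mult.assoc)

lemma scale_mat_sum_left: "scale_mat (\<Sum>x\<in>X. f x) P = (\<Sum>x\<in>X. scale_mat (f x) P)"
  by (induction X rule: infinite_finite_induct) (simp_all add: vec_eq_iff distrib_right)

lemma scale_mat_sum_right: "scale_mat c (\<Sum>x\<in>X. P x) = (\<Sum>x\<in>X. scale_mat c (P x))"
  by (simp add: vec_eq_iff sum_distrib_left)

lemma scale_mat_add_left: "scale_mat (c + e) P = scale_mat c P + scale_mat e P"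
  by (simp add: vec_eq_iff distrib_right)

lemma matrix_add_rdistrib: "(P + Q) ** (R :: complex^'d^'d) = P ** R + Q ** R"
  by (simp add: vec_eq_iff matrix_mult_nth distrib_right sum.distrib)

lemma scale_mat_zero [simp]: "scale_mat 0 P = 0"
  by (simp add: vec_eq_iff)

lemmas scale_mat_distrib =
  matrix_mult_sum_left matrix_mult_sum_right scale_mat_mult_left scale_mat_mult_right
  scale_mat_scale_mat scale_mat_sum_left scale_mat_sum_right

primrec mat_word :: "('i \<Rightarrow> complex^'d^'d) \<Rightarrow> 'i list \<Rightarrow> complex^'d^'d" where
  "mat_word A [] = mat 1"
| "mat_word A (j # w) = A j ** mat_word A w"

lemma mat_word_append: "mat_word A (u @ v) = mat_word A u ** mat_word A v"
  by (induction u) (simp_all add: matrix_mul_assoc)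

definition words :: "'i set \<Rightarrow> nat \<Rightarrow> 'i list set" where
  "words S L = {w. set w \<subseteq> S \<and> length w = L}"

lemma finite_words [simp]: "finite S \<Longrightarrow> finite (words S L)"
  by (simp add: words_def finite_lists_length_eq)

lemma words_0 [simp]: "words S 0 = {[]}"
  by (auto simp: words_def)

lemma bij_betw_snoc_words: "bij_betw (\<lambda>(w, j). w @ [j]) (words S L \<times> S) (words S (Suc L))"
proof (rule bij_betwI')
  fix w assume w: "w \<in> words S (Suc L)"
  then have "w \<noteq> []"
    by (auto simp: words_def)
  then have "w = butlast w @ [last w]" and "(butlast w, last w) \<in> words S L \<times> S"
    using w by (auto simp: words_def dest: in_set_butlastD)
  then show "\<exists>x\<in>words S L \<times> S. w = (case x of (w, j) \<Rightarrow> w @ [j])"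
    by force
qed (auto simp: words_def)

lemma bij_betw_split_words:
  assumes "j \<in> S" and "l < L"
  shows "bij_betw (\<lambda>(u, v). u @ j # v) (words S l \<times> words S (L - 1 - l)) {w \<in> words S L. w ! l = j}"
proof (rule bij_betwI')
  fix x y assume "x \<in> words S l \<times> words S (L - 1 - l)" "y \<in> words S l \<times> words S (L - 1 - l)"
  then obtain u v u' v' where "x = (u, v)" "y = (u', v')" "length u = l" "length u' = l"
    by (auto simp: words_def)
  then show "((case x of (u, v) \<Rightarrow> u @ j # v) = (case y of (u, v) \<Rightarrow> u @ j # v)) = (x = y)"
    by simp
next
  fix w assume w: "w \<in> {w \<in> words S L. w ! l = j}"
  then have "w = take l w @ j # drop (Suc l) w"
    using assms(2) id_take_nth_drop[of l w] by (simp add: words_def)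
  moreover have "(take l w, drop (Suc l) w) \<in> words S l \<times> words S (L - 1 - l)"
    using w assms(2) by (auto simp: words_def dest: in_set_takeD in_set_dropD)
  ultimately show "\<exists>x\<in>words S l \<times> words S (L - 1 - l). w = (case x of (u, v) \<Rightarrow> u @ j # v)"
    by force
qed (use assms in \<open>auto simp: words_def nth_append\<close>)

definition word_moment ::
    "('i \<Rightarrow> complex^'d^'d) \<Rightarrow> ('i list \<Rightarrow> complex) \<Rightarrow> 'i set \<Rightarrow> nat \<Rightarrow> complex^'d^'d" where
  "word_moment A f S L = (\<Sum>w\<in>words S L. scale_mat (f w) (mat_word A w))"

lemma sum_scale_mat_mult:
  "(\<Sum>u\<in>U. scale_mat (f u) (P u)) ** Q ** (\<Sum>v\<in>V. scale_mat (g v) (R v)) =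
     (\<Sum>u\<in>U. \<Sum>v\<in>V. scale_mat (f u * g v) (P u ** Q ** R v))"
  by (simp add: scale_mat_distrib sum.swap[of _ U] mult.commute)

lemma sum_words_occurrence_sum:
  assumes "finite S" and "j \<in> S"
  shows "(\<Sum>w\<in>words S L. scale_mat (occurrence_sum j f g w) (mat_word A w)) =
    (\<Sum>l<L. word_moment A f S l ** A j ** word_moment A g S (L - 1 - l))"
proof -
  let ?F = "\<lambda>u v. scale_mat (f u * g v) (mat_word A u ** A j ** mat_word A v)"
  have "(\<Sum>w\<in>words S L. scale_mat (occurrence_sum j f g w) (mat_word A w)) =
      (\<Sum>w\<in>words S L. \<Sum>l<L. if w ! l = j then ?F (take l w) (drop (Suc l) w) else 0)"
  proof (intro sum.cong refl)
    fix w assume "w \<in> words S L"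
    then have "length w = L"
      by (simp add: words_def)
    moreover have "mat_word A w = mat_word A (take l w) ** A j ** mat_word A (drop (Suc l) w)"
      if "l < length w" "w ! l = j" for l
      using that id_take_nth_drop[of l w]
      by (metis mat_word.simps(2) mat_word_append matrix_mul_assoc)
    ultimately show "scale_mat (occurrence_sum j f g w) (mat_word A w) =
        (\<Sum>l<L. if w ! l = j then ?F (take l w) (drop (Suc l) w) else 0)"
      unfolding occurrence_sum_def scale_mat_sum_left by (intro sum.cong refl) auto
  qed
  also have "\<dots> = (\<Sum>l<L. \<Sum>w\<in>{w \<in> words S L. w ! l = j}. ?F (take l w) (drop (Suc l) w))"
    using assms(1) by (subst sum.swap) (simp add: sum.inter_filter)
  also have "\<dots> = (\<Sum>l<L. \<Sum>u\<in>words S l. \<Sum>v\<in>words S (L - 1 - l). ?F u v)"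
  proof (rule sum.cong[OF refl])
    fix l assume "l \<in> {..<L}"
    then show "(\<Sum>w\<in>{w \<in> words S L. w ! l = j}. ?F (take l w) (drop (Suc l) w)) =
        (\<Sum>u\<in>words S l. \<Sum>v\<in>words S (L - 1 - l). ?F u v)"
      unfolding sum.cartesian_product
      by (subst sum.reindex_bij_betw[symmetric, OF bij_betw_split_words[OF assms(2)]])
        (auto simp: words_def intro!: sum.cong)
  qed
  also have "\<dots> = (\<Sum>l<L. word_moment A f S l ** A j ** word_moment A g S (L - 1 - l))"
    by (simp add: word_moment_def sum_scale_mat_mult)
  finally show ?thesis .
qed

definition sandwich_moment ::
    "('i \<Rightarrow> complex^'d^'d) \<Rightarrow> complex^'d^'d \<Rightarrow> ('i list \<Rightarrow> complex) \<Rightarrow> 'i set \<Rightarrow> nat \<Rightarrow> nat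
      \<Rightarrow> complex^'d^'d" where
  "sandwich_moment A B f S p q =
     (\<Sum>u\<in>words S p. \<Sum>v\<in>words S q. scale_mat (f (u @ v)) (mat_word A u ** B ** mat_word A v))"

lemma sandwich_moment_sum_right:
  "sandwich_moment A B f S p q =
     (\<Sum>v\<in>words S q. word_moment A (\<lambda>u. f (u @ v)) S p ** B ** mat_word A v)"
  unfolding sandwich_moment_def word_moment_def
  by (simp add: scale_mat_distrib sum.swap[of _ "words S p"])

lemma sandwich_moment_sum_left:
  "sandwich_moment A B f S p q =
     (\<Sum>u\<in>words S p. mat_word A u ** B ** word_moment A (\<lambda>v. f (u @ v)) S q)"
  unfolding sandwich_moment_def word_moment_def by (simp add: scale_mat_distrib matrix_mul_assoc)

lemma sum_words_occurrence_sum_prefix: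
  assumes "finite S" and "j \<in> S"
  shows "(\<Sum>u\<in>words S p. \<Sum>v\<in>words S q.
      scale_mat (occurrence_sum j f (\<lambda>b. f (b @ v)) u) (mat_word A u ** B ** mat_word A v)) =
    (\<Sum>l<p. word_moment A f S l ** A j ** sandwich_moment A B f S (p - 1 - l) q)"
proof -
  have "(\<Sum>u\<in>words S p. \<Sum>v\<in>words S q.
      scale_mat (occurrence_sum j f (\<lambda>b. f (b @ v)) u) (mat_word A u ** B ** mat_word A v)) =
    (\<Sum>v\<in>words S q. (\<Sum>u\<in>words S p.
      scale_mat (occurrence_sum j f (\<lambda>b. f (b @ v)) u) (mat_word A u)) ** (B ** mat_word A v))"
    by (simp add: scale_mat_distrib matrix_mul_assoc sum.swap[of _ "words S p"])
  also have "\<dots> = (\<Sum>v\<in>words S q. (\<Sum>l<p.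
        word_moment A f S l ** A j ** word_moment A (\<lambda>b. f (b @ v)) S (p - 1 - l))
      ** (B ** mat_word A v))"
    by (simp add: sum_words_occurrence_sum[OF assms])
  also have "\<dots> = (\<Sum>l<p. word_moment A f S l ** A j ** sandwich_moment A B f S (p - 1 - l) q)"
    by (simp add: sandwich_moment_sum_right matrix_mult_sum_left matrix_mult_sum_right
        matrix_mul_assoc sum.swap[of _ "words S q"])
  finally show ?thesis .
qed

lemma sum_words_occurrence_sum_suffix:
  assumes "finite S" and "j \<in> S"
  shows "(\<Sum>u\<in>words S p. \<Sum>v\<in>words S q.
      scale_mat (occurrence_sum j (\<lambda>a. f (u @ a)) f v) (mat_word A u ** B ** mat_word A v)) =
    (\<Sum>l<q. sandwich_moment A B f S p l ** A j ** word_moment A f S (q - 1 - l))"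
proof -
  have "(\<Sum>u\<in>words S p. \<Sum>v\<in>words S q.
      scale_mat (occurrence_sum j (\<lambda>a. f (u @ a)) f v) (mat_word A u ** B ** mat_word A v)) =
    (\<Sum>u\<in>words S p. mat_word A u ** B ** (\<Sum>v\<in>words S q.
      scale_mat (occurrence_sum j (\<lambda>a. f (u @ a)) f v) (mat_word A v)))"
    by (simp add: scale_mat_distrib matrix_mul_assoc)
  also have "\<dots> = (\<Sum>u\<in>words S p. mat_word A u ** B ** (\<Sum>l<q.
      word_moment A (\<lambda>a. f (u @ a)) S l ** A j ** word_moment A f S (q - 1 - l)))"
    by (simp add: sum_words_occurrence_sum[OF assms])
  also have "\<dots> = (\<Sum>l<q. sandwich_moment A B f S p l ** A j ** word_moment A f S (q - 1 - l))"
    by (simp add: sandwich_moment_sum_left matrix_mult_sum_left matrix_mult_sum_right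
        matrix_mul_assoc sum.swap[of _ "words S p"])
  finally show ?thesis .
qed

lemma sum_words_occurrence_sum_append:
  assumes "finite S" and "j \<in> S"
  shows "(\<Sum>u\<in>words S p. \<Sum>v\<in>words S q.
      scale_mat (occurrence_sum j f f (u @ v)) (mat_word A u ** B ** mat_word A v)) =
    (\<Sum>l<p. word_moment A f S l ** A j ** sandwich_moment A B f S (p - 1 - l) q)
    + (\<Sum>l<q. sandwich_moment A B f S p l ** A j ** word_moment A f S (q - 1 - l))"
  unfolding occurrence_sum_append scale_mat_add_left sum.distrib
  by (simp only: sum_words_occurrence_sum_prefix[where f = f, OF assms]
      sum_words_occurrence_sum_suffix[where f = f, OF assms])

context algebra_with_state
begin

text \<open>tensor_sum C m X is the element \<open>\<Sum>x\<in>X. C x \<otimes> m x\<close> of \<open>M\<^sub>d(\<complex>) \<otimes> \<A>\<close>.\<close>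

definition tensor_sum ::
    "('x \<Rightarrow> complex^'d^'d) \<Rightarrow> ('x \<Rightarrow> 'a) \<Rightarrow> 'x set \<Rightarrow> 'd::finite \<Rightarrow> 'd \<Rightarrow> 'a" where
  "tensor_sum C m X = (\<lambda>a b. \<Sum>x\<in>X. sc (C x $ a $ b) (m x))"

lemma mmul_tensor_sum:
  assumes "finite X" and "finite Y"
  shows "mmul (tensor_sum C m X) (tensor_sum D m' Y) =
    tensor_sum (\<lambda>(x, y). C x ** D y) (\<lambda>(x, y). m x * m' y) (X \<times> Y)"
proof (intro ext)
  fix a b
  have "mmul (tensor_sum C m X) (tensor_sum D m' Y) a b =
      (\<Sum>k\<in>UNIV. \<Sum>x\<in>X. \<Sum>y\<in>Y. sc (C x $ a $ k * D y $ k $ b) (m x * m' y))"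
    by (simp add: mmul_def tensor_sum_def sum_product scale_mult_scale)
  also have "\<dots> = (\<Sum>x\<in>X. \<Sum>y\<in>Y. \<Sum>k\<in>UNIV. sc (C x $ a $ k * D y $ k $ b) (m x * m' y))"
    by (subst sum.swap) (subst (2) sum.swap, rule refl)
  also have "\<dots> = (\<Sum>x\<in>X. \<Sum>y\<in>Y. sc ((C x ** D y) $ a $ b) (m x * m' y))"
    by (simp add: matrix_mult_nth scale_sum_left)
  also have "\<dots> = tensor_sum (\<lambda>(x, y). C x ** D y) (\<lambda>(x, y). m x * m' y) (X \<times> Y) a b"
    by (simp add: tensor_sum_def sum.cartesian_product case_prod_unfold)
  finally show "mmul (tensor_sum C m X) (tensor_sum D m' Y) a b =
      tensor_sum (\<lambda>(x, y). C x ** D y) (\<lambda>(x, y). m x * m' y) (X \<times> Y) a b" .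
qed

lemma tensor_sum_reindex:
  assumes "bij_betw h X Y" and "\<And>x. x \<in> X \<Longrightarrow> C' (h x) = C x" and "\<And>x. x \<in> X \<Longrightarrow> m' (h x) = m x"
  shows "tensor_sum C m X = tensor_sum C' m' Y"
  unfolding tensor_sum_def
  using assms by (subst sum.reindex_bij_betw[symmetric, OF assms(1)]) auto

lemma ptrace_tensor_sum: "ptrace tau (tensor_sum C m X) = (\<Sum>x\<in>X. scale_mat (tau (m x)) (C x))"
  by (simp add: vec_eq_iff ptrace_def tensor_sum_def tau_sum tau_scale mult.commute)

lemma tens1_eq_tensor_sum: "tens1 sc B = tensor_sum (\<lambda>_. B) (\<lambda>_. 1) {()}"
  by (simp add: tens1_def tensor_sum_def fun_eq_iff)

lemma Xfree_eq_tensor_sum: "Xfree sc A s n = tensor_sum A (s(0 := 1)) (insert 0 {1..n})"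
  by (auto simp: Xfree_def tensor_sum_def fun_eq_iff intro!: sum.cong)

lemma mpow_tensor_sum:
  assumes "finite S"
  shows "mpow (tensor_sum A t S) p = tensor_sum (mat_word A) (word_prod t) (words S p)"
proof (induction p)
  case 0
  show ?case
    by (simp add: mone_def tensor_sum_def mat_def fun_eq_iff)
next
  case (Suc p)
  have "mpow (tensor_sum A t S) (Suc p) =
      mmul (tensor_sum (mat_word A) (word_prod t) (words S p)) (tensor_sum A t S)"
    using Suc by simp
  also have "\<dots> =
      tensor_sum (\<lambda>(u, j). mat_word A u ** A j) (\<lambda>(u, j). word_prod t u * t j) (words S p \<times> S)"
    using assms by (simp add: mmul_tensor_sum)
  also have "\<dots> = tensor_sum (mat_word A) (word_prod t) (words S (Suc p))"
    by (rule tensor_sum_reindex[OF bij_betw_snoc_words])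
      (auto simp: mat_word_append word_prod_append)
  finally show ?case .
qed

lemma sandwich_tensor_sum:
  assumes "finite S"
  shows "mmul (mmul (mpow (tensor_sum A t S) p) (tens1 sc B)) (mpow (tensor_sum A t S) q) =
    tensor_sum (\<lambda>(u, v). mat_word A u ** B ** mat_word A v) (\<lambda>(u, v). word_prod t (u @ v))
      (words S p \<times> words S q)"
proof -
  have "mmul (mmul (mpow (tensor_sum A t S) p) (tens1 sc B)) (mpow (tensor_sum A t S) q) =
      tensor_sum (\<lambda>((u, _), v). mat_word A u ** B ** mat_word A v)
        (\<lambda>((u, _), v). word_prod t u * 1 * word_prod t v) ((words S p \<times> {()}) \<times> words S q)"
    using assms by (simp add: mpow_tensor_sum tens1_eq_tensor_sum mmul_tensor_sum case_prod_unfold)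
  also have "\<dots> = tensor_sum (\<lambda>(u, v). mat_word A u ** B ** mat_word A v)
      (\<lambda>(u, v). word_prod t (u @ v)) (words S p \<times> words S q)"
    by (rule tensor_sum_reindex[where h = "\<lambda>((u, _), v). (u, v)"])
      (auto simp: word_prod_append intro!: bij_betwI')
  finally show ?thesis .
qed

lemma ptrace_mpow:
  "finite S \<Longrightarrow> ptrace tau (mpow (tensor_sum A t S) p) = word_moment A (\<lambda>w. tau (word_prod t w)) S p"
  by (simp add: mpow_tensor_sum ptrace_tensor_sum word_moment_def)

lemma ptrace_sandwich:
  assumes "finite S"
  shows "ptrace tau
      (mmul (mmul (mpow (tensor_sum A t S) p) (tens1 sc B)) (mpow (tensor_sum A t S) q)) =
    sandwich_moment A B (\<lambda>w. tau (word_prod t w)) S p q"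
  using assms
  by (simp add: sandwich_tensor_sum ptrace_tensor_sum sandwich_moment_def sum.cartesian_product
      case_prod_unfold)

end

context free_semicircular_family
begin

lemma ptrace_mmul_generator:
  assumes "finite I" and "e \<notin> I" and "finite Z"
  shows "ptrace tau (mmul (tensor_sum C m Z) (tensor_sum A (s(e := 1)) (insert e I))) =
    (\<Sum>z\<in>Z. scale_mat (tau (m z)) (C z)) ** A e
    + (\<Sum>j\<in>I. \<Sum>z\<in>Z. scale_mat (tau (m z * s j)) (C z ** A j))"
proof -
  have "ptrace tau (mmul (tensor_sum C m Z) (tensor_sum A (s(e := 1)) (insert e I))) =
      (\<Sum>(z, j)\<in>Z \<times> insert e I. scale_mat (tau (m z * (s(e := 1)) j)) (C z ** A j))"
    using assms by (simp add: mmul_tensor_sum ptrace_tensor_sum case_prod_beta')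
  also have "\<dots> = (\<Sum>z\<in>Z. \<Sum>j\<in>insert e I. scale_mat (tau (m z * (s(e := 1)) j)) (C z ** A j))"
    by (simp add: sum.cartesian_product)
  also have "\<dots> = (\<Sum>z\<in>Z. scale_mat (tau (m z)) (C z ** A e)
      + (\<Sum>j\<in>I. scale_mat (tau (m z * s j)) (C z ** A j)))"
    using assms by (intro sum.cong refl) (auto intro!: sum.cong)
  also have "\<dots> = (\<Sum>z\<in>Z. scale_mat (tau (m z)) (C z)) ** A e
      + (\<Sum>j\<in>I. \<Sum>z\<in>Z. scale_mat (tau (m z * s j)) (C z ** A j))"
    by (simp add: sum.distrib scale_mat_distrib sum.swap[of _ Z])
  finally show ?thesis .
qed

theorem ptrace_mpow_Suc:
  fixes A :: "'i \<Rightarrow> complex^'d::finite^'d"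
  assumes "finite I" and "e \<notin> I"
  defines "X \<equiv> tensor_sum A (s(e := 1)) (insert e I)"
  shows "ptrace tau (mpow X (Suc L)) = ptrace tau (mpow X L) ** A e
    + (\<Sum>j\<in>I. \<Sum>l<L. ptrace tau (mpow X l) ** A j ** ptrace tau (mpow X (L - 1 - l)) ** A j)"
proof -
  let ?S = "insert e I" and ?f = "\<lambda>w. tau (word_prod (s(e := 1)) w)"
  have "ptrace tau (mpow X (Suc L)) = ptrace tau (mpow X L) ** A e
      + (\<Sum>j\<in>I.
          (\<Sum>w\<in>words ?S L. scale_mat (tau (word_prod (s(e := 1)) w * s j)) (mat_word A w)) ** A j)"
    using assms
    by (simp add: X_def mpow_tensor_sum ptrace_mmul_generator ptrace_tensor_sum scale_mat_distrib)
  also have "\<dots> = ptrace tau (mpow X L) ** A e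
      + (\<Sum>j\<in>I. (\<Sum>w\<in>words ?S L. scale_mat (occurrence_sum j ?f ?f w) (mat_word A w)) ** A j)"
    using assms by (auto simp: words_def tau_word_prod_snoc scale_mat_distrib intro!: sum.cong)
  also have "\<dots> = ptrace tau (mpow X L) ** A e
      + (\<Sum>j\<in>I. \<Sum>l<L. ptrace tau (mpow X l) ** A j ** ptrace tau (mpow X (L - 1 - l)) ** A j)"
    using assms
    by (simp add: sum_words_occurrence_sum X_def ptrace_mpow matrix_mult_sum_left
        cong: sum.cong_simp)
  finally show ?thesis .
qed

theorem ptrace_sandwich_Suc:
  fixes A :: "'i \<Rightarrow> complex^'d::finite^'d" and B :: "complex^'d^'d"
  assumes "finite I" and "e \<notin> I"
  defines "X \<equiv> tensor_sum A (s(e := 1)) (insert e I)"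
  defines "Y \<equiv> \<lambda>p q. mmul (mmul (mpow X p) (tens1 sc B)) (mpow X q)"
  shows "ptrace tau (Y p (Suc q)) = ptrace tau (Y p q) ** A e
    + (\<Sum>j\<in>I. \<Sum>l<p. ptrace tau (mpow X l) ** A j ** ptrace tau (Y (p - 1 - l) q) ** A j)
    + (\<Sum>j\<in>I. \<Sum>l<q. ptrace tau (Y p l) ** A j ** ptrace tau (mpow X (q - 1 - l)) ** A j)"
proof -
  let ?S = "insert e I" and ?f = "\<lambda>w. tau (word_prod (s(e := 1)) w)"
  let ?M = "\<lambda>u v. mat_word A u ** B ** mat_word A v"
  have "Y p (Suc q) = mmul (Y p q) X"
    by (simp add: Y_def mmul_assoc)
  then have "ptrace tau (Y p (Suc q)) = ptrace tau (Y p q) ** A e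
      + (\<Sum>j\<in>I. (\<Sum>u\<in>words ?S p. \<Sum>v\<in>words ?S q.
          scale_mat (tau (word_prod (s(e := 1)) (u @ v) * s j)) (?M u v)) ** A j)"
    using assms
    by (simp add: X_def Y_def sandwich_tensor_sum ptrace_mmul_generator ptrace_tensor_sum
        sum.cartesian_product case_prod_unfold scale_mat_distrib)
  also have "\<dots> = ptrace tau (Y p q) ** A e
      + (\<Sum>j\<in>I. (\<Sum>u\<in>words ?S p. \<Sum>v\<in>words ?S q.
          scale_mat (occurrence_sum j ?f ?f (u @ v)) (?M u v)) ** A j)"
    using assms by (auto simp: words_def tau_word_prod_snoc scale_mat_distrib intro!: sum.cong)
  also have "\<dots> = ptrace tau (Y p q) ** A e
      + (\<Sum>j\<in>I. \<Sum>l<p. ptrace tau (mpow X l) ** A j ** ptrace tau (Y (p - 1 - l) q) ** A j)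
      + (\<Sum>j\<in>I. \<Sum>l<q. ptrace tau (Y p l) ** A j ** ptrace tau (mpow X (q - 1 - l)) ** A j)"
    using assms
    by (simp add: sum_words_occurrence_sum_append X_def Y_def ptrace_mpow ptrace_sandwich
        matrix_add_rdistrib matrix_mult_sum_left sum.distrib add.assoc cong: sum.cong_simp)
  finally show ?thesis .
qed

end

theorem lemma6p1:
  fixes sc :: "complex \<Rightarrow> 'a::ring_1 \<Rightarrow> 'a" and st :: "'a \<Rightarrow> 'a" and nm :: "'a \<Rightarrow> real"
    and tau :: "'a \<Rightarrow> complex" and s :: "nat \<Rightarrow> 'a" and n :: nat
    and A :: "nat \<Rightarrow> complex^'d::finite^'d" and X :: "'d \<Rightarrow> 'd \<Rightarrow> 'a"
  assumes "cstar_prob_space sc st nm tau"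
    and "\<forall>i\<in>{1..n}. std_semicircular sc st tau (s i)"
    and "free_family sc tau {1..n} s"
    and "X = Xfree sc A s n"
  shows "(\<forall>p::nat. p \<ge> 2 \<longrightarrow>
            ptrace tau (mpow X p) =
              ptrace tau (mpow X (p - 1)) ** A 0
              + (\<Sum>i=1..n. \<Sum>k=0..p-2.
                   ptrace tau (mpow X k) ** A i ** ptrace tau (mpow X (p - 2 - k)) ** A i))
       \<and> (\<forall>(B::complex^'d^'d) (p::nat) (q::nat). p \<ge> 1 \<and> q \<ge> 1 \<longrightarrow>
            ptrace tau (mmul (mmul (mpow X p) (tens1 sc B)) (mpow X q)) =
              ptrace tau (mmul (mmul (mpow X p) (tens1 sc B)) (mpow X (q - 1))) ** A 0
              + (\<Sum>i=1..n. \<Sum>k=0..p-1.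
                   ptrace tau (mpow X k) ** A i
                   ** ptrace tau (mmul (mmul (mpow X (p - 1 - k)) (tens1 sc B)) (mpow X (q - 1))) ** A i)
              + (if q \<ge> 2 then
                   (\<Sum>i=1..n. \<Sum>k=0..q-2.
                     ptrace tau (mmul (mmul (mpow X p) (tens1 sc B)) (mpow X k)) ** A i
                     ** ptrace tau (mpow X (q - 2 - k)) ** A i)
                 else 0))"
proof -
  interpret algebra_with_state sc tau
    using assms(1) by (rule cstar_prob_space_imp_algebra_with_state)
  interpret free_semicircular_family sc tau "{1..n}" s
    using assms(2,3) by unfold_locales (auto simp: std_semicircular_def semicircle_moment_def)
  have X: "X = tensor_sum A (s(0 := 1)) (insert 0 {1..n})"
    using assms(4) by (simp add: Xfree_eq_tensor_sum)
  have range: "{0..m - 1} = {..<m}" if "0 < m" for m :: nat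
    using that by auto
  show ?thesis
    apply (intro conjI allI impI)
    subgoal for p
      using ptrace_mpow_Suc[where e = 0 and A = A and L = "p - 1"] range[of "p - 1"]
      by (simp add: X Suc_diff_Suc numeral_2_eq_2)
    subgoal for B p q
      using ptrace_sandwich_Suc[where e = 0 and A = A and B = B and p = p and q = "q - 1"]
        range[of p] range[of "q - 1"]
      by (simp add: X numeral_2_eq_2)
    done
qed

end
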